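(* Let $E$ be a uniformly convex Banach space. There exists $q_0<1$ such that for all continuous isometric linear representations $\pi:H_3(\mathbb{R})\to\mathrm{O}(E)$, all $a,c\in\mathbb{R}$ and all $\xi\in E$, \[\|\pi(X(\gamma_a)Y(\gamma_c))\xi\|\le\max\big(q_0\|\xi\|,\;2\|\pi(Z(\gamma_{a+c}))\xi\|\big).\]
   Context: $H_3(\mathbb{R})$ is the simply connected Lie group whose Lie algebra has basis $\mathfrak{X},\mathfrak{Y},\mathfrak{Z}$ with $[\mathfrak{X},\mathfrak{Y}]=\mathfrak{Z}$, $[\mathfrak{X},\mathfrak{Z}]=[\mathfrak{Y},\mathfrak{Z}]=0$; $X(t)=\exp(t\mathfrak{X})$, $Y(t)=\exp(t\mathfrak{Y})$, $Z(t)=\exp(t\mathfrak{Z})$. $\gamma_a$ is the centered Gaussian on $\mathbb{R}$ with variance $e^{2a}$; $L(\gamma_a)$ denotes its pushforward under a one-parameter subgroup $L$, products of measures are convolutions, and $\pi(\mu)=\int\pi(g)\,d\mu(g)$. *)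

theory Defs
  imports "HOL-Probability.Probability"
begin

text \<open>The Heisenberg group H_3(R), realised as upper unitriangular matrices
  [[1,x,z],[0,1,y],[0,0,1]] encoded by the triple (x,y,z).\<close>

type_synonym heis = "real \<times> real \<times> real"

definition hmul :: "heis \<Rightarrow> heis \<Rightarrow> heis" where
  "hmul g h = (case g of (x, y, z) \<Rightarrow> case h of (x', y', z') \<Rightarrow>
      (x + x', y + y', z + z' + x * y'))"

definition hone :: heis where "hone = (0, 0, 0)"

definition Xg :: "real \<Rightarrow> heis" where "Xg t = (t, 0, 0)"
definition Yg :: "real \<Rightarrow> heis" where "Yg t = (0, t, 0)"
definition Zg :: "real \<Rightarrow> heis" where "Zg t = (0, 0, t)"

definition uniformly_convex :: "'a::real_normed_vector set \<Rightarrow> bool" where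
  "uniformly_convex S \<longleftrightarrow>
     (\<forall>\<epsilon>>0. \<exists>\<delta>>0. \<forall>x\<in>S. \<forall>y\<in>S.
        norm x \<le> 1 \<longrightarrow> norm y \<le> 1 \<longrightarrow> norm (x - y) \<ge> \<epsilon> \<longrightarrow>
        norm ((1/2) *\<^sub>R (x + y)) \<le> 1 - \<delta>)"

text \<open>Continuous (strongly continuous) isometric linear representation of H_3(R)
  into the orthogonal group O(E) of surjective linear isometries of E.\<close>
definition heis_isometric_rep :: "(heis \<Rightarrow> 'a::real_normed_vector \<Rightarrow> 'a) \<Rightarrow> bool" where
  "heis_isometric_rep \<pi> \<longleftrightarrow>
     (\<forall>g. linear (\<pi> g)) \<and>
     (\<forall>g v. norm (\<pi> g v) = norm v) \<and>
     (\<forall>g. surj (\<pi> g)) \<and>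
     \<pi> hone = id \<and>
     (\<forall>g h. \<pi> (hmul g h) = \<pi> g \<circ> \<pi> h) \<and>
     (\<forall>v. continuous_on UNIV (\<lambda>g. \<pi> g v))"

text \<open>Centered Gaussian density with variance e^(2a), i.e. standard deviation e^a.\<close>
definition gauss :: "real \<Rightarrow> real \<Rightarrow> real" where
  "gauss a = normal_density 0 (exp a)"

text \<open>pi(X(gamma_a) Y(gamma_c)) xi = integral of pi(X(s) Y(t)) xi d gamma_a(s) d gamma_c(t)
  (vector-valued integral over R^2 of a continuous function against the product density).\<close>
definition piXY :: "(heis \<Rightarrow> 'a::real_normed_vector \<Rightarrow> 'a) \<Rightarrow> real \<Rightarrow> real \<Rightarrow> 'a \<Rightarrow> 'a" where
  "piXY \<pi> a c v = integral UNIV (\<lambda>(s::real, t::real).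
      (gauss a s * gauss c t) *\<^sub>R \<pi> (hmul (Xg s) (Yg t)) v)"

definition piZ :: "(heis \<Rightarrow> 'a::real_normed_vector \<Rightarrow> 'a) \<Rightarrow> real \<Rightarrow> 'a \<Rightarrow> 'a" where
  "piZ \<pi> b v = integral UNIV (\<lambda>u::real. gauss b u *\<^sub>R \<pi> (Zg u) v)"

end

theory Submission
  imports Defs
begin

(*
  Write eta = pi(X(gamma_a) Y(gamma_c)) xi and n = norm xi, and suppose norm eta > (1 - d e0) n, where d is
  the modulus of uniform convexity for a small tolerance e0. The vector eta is an average of the vectors
  pi(X(s) Y(t)) xi, all of norm n, and its norm is close to n; by uniform convexity these vectors are
  on average close to y = (n / norm eta) eta, up to an error O(e0 n).
  Averaging arguments then produce t0 in [0, e^c] and s1, s2 with s1 - s2 in [2 e^a, 4 e^a] such that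
  the four vectors pi(X(s_i) Y(t)) xi, pi(X(s_i) Y(t0)) xi stay close to y on average in t.
  Because X(s1) Y(t) and X(s2) Y(t) differ by a commutator, the displacement of xi under
  Z((s1 - s2)(t - t0)) is bounded by these four distances, and the substitution u = (s1 - s2)(t - t0)
  carries gamma_c to a density dominated by a multiple of gamma_(a+c). Hence the gamma_(a+c)-average of
  norm (pi(Z(u)) xi - xi) is at most n/2, so that norm (pi(Z(gamma_(a+c))) xi) >= n/2 >= norm eta / 2.
*)

section \<open>Integrals over Euclidean space\<close>

lemma integrable_on_UNIV_weighted_bounded:
  fixes w :: "'n::euclidean_space \<Rightarrow> real" and F :: "'n \<Rightarrow> 'b::banach"
  assumes w: "continuous_on UNIV w" "w integrable_on UNIV" "\<And>x. 0 \<le> w x"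
    and F: "continuous_on UNIV F" "\<And>x. norm (F x) \<le> B"
  shows "(\<lambda>x. w x *\<^sub>R F x) integrable_on UNIV"
proof (rule integrable_on_all_intervals_integrable_bound)
  have cont: "continuous_on UNIV (\<lambda>x. w x *\<^sub>R F x)"
    using w(1) F(1) by (rule continuous_on_scaleR)
  show "(\<lambda>x. if x \<in> UNIV then w x *\<^sub>R F x else 0) integrable_on cbox a b" for a b
    using integrable_continuous[OF continuous_on_subset[OF cont subset_UNIV]] by simp
  show "norm (w x *\<^sub>R F x) \<le> B * w x" for x
    using mult_left_mono[OF F(2) w(3)] w(3)[of x] by (simp add: mult.commute)
  show "(\<lambda>x. B * w x) integrable_on UNIV"
    using w(2) by (rule integrable_on_mult_right)
qed

lemma integrable_on_UNIV_weighted_norm: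
  fixes w :: "'n::euclidean_space \<Rightarrow> real" and F :: "'n \<Rightarrow> 'b::banach"
  assumes w: "continuous_on UNIV w" "w integrable_on UNIV" "\<And>x. 0 \<le> w x"
    and F: "continuous_on UNIV F" "\<And>x. norm (F x) \<le> B"
  shows "(\<lambda>x. w x * norm (F x)) integrable_on UNIV"
  using integrable_on_UNIV_weighted_bounded[OF w continuous_on_norm[OF F(1)], of B] F(2) by simp

lemma nn_integral_weighted_eq_integral:
  fixes w f :: "'n::euclidean_space \<Rightarrow> real"
  assumes w: "continuous_on UNIV w" "w integrable_on UNIV" "\<And>x. 0 \<le> w x"
    and f: "continuous_on UNIV f" "\<And>x. 0 \<le> f x" "\<And>x. f x \<le> B"
  shows "(\<integral>\<^sup>+x. ennreal (w x) * ennreal (f x) \<partial>lborel) = ennreal (integral UNIV (\<lambda>x. w x * f x))"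
proof -
  have "(\<lambda>x. w x *\<^sub>R f x) integrable_on UNIV"
    using f by (intro integrable_on_UNIV_weighted_bounded[OF w f(1), of B]) auto
  moreover have "continuous_on UNIV (\<lambda>x. w x * f x)"
    using w(1) f(1) by (rule continuous_on_mult)
  ultimately have "(\<integral>\<^sup>+x. ennreal (w x * f x) \<partial>lborel) = ennreal (integral UNIV (\<lambda>x. w x * f x))"
    using w(3) f(2)
    by (intro nn_integral_has_integral_lborel[OF borel_measurable_continuous_onI] integrable_integral) simp_all
  then show ?thesis
    using w(3) by (simp add: ennreal_mult')
qed

section \<open>Gaussian densities\<close>

lemma gauss_formula: "gauss a x = exp (- (x\<^sup>2) / (2 * (exp a)\<^sup>2)) / (sqrt (2 * pi) * exp a)"
  unfolding gauss_def normal_density_def by (simp add: real_sqrt_mult)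

lemma gauss_pos: "0 < gauss a x"
  unfolding gauss_def by (rule normal_density_pos) simp

lemma continuous_on_gauss: "continuous_on UNIV (gauss a)"
  unfolding gauss_formula[abs_def] by (intro continuous_intros) auto

lemma borel_measurable_gauss[measurable]: "gauss a \<in> borel_measurable borel"
  unfolding gauss_def by simp

lemma nn_integral_gauss: "(\<integral>\<^sup>+x. ennreal (gauss a x) \<partial>lborel) = 1"
proof -
  have "(\<integral>\<^sup>+x. ennreal (gauss a x) \<partial>lborel) = ennreal (\<integral>x. gauss a x \<partial>lborel)"
    unfolding gauss_def by (rule nn_integral_eq_integral) (auto intro!: integrable_normal_density)
  also have "(\<integral>x. gauss a x \<partial>lborel) = 1"
    unfolding gauss_def by (rule integral_normal_density) simp
  finally show ?thesis by simp
qed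

lemma has_integral_gauss: "(gauss a has_integral 1) UNIV"
  by (rule nn_integral_has_integral) (auto simp: nn_integral_gauss less_imp_le[OF gauss_pos])

text \<open>\<open>gauss_floor\<close> is the minimum of \<open>exp a * gauss a\<close> on \<open>[-2 exp a, 2 exp a]\<close>.\<close>
definition gauss_floor :: real where "gauss_floor = exp (-2) / sqrt (2 * pi)"

lemma gauss_floor_pos: "0 < gauss_floor"
  by (simp add: gauss_floor_def)

lemma gauss_floor_le_1: "gauss_floor \<le> 1"
proof -
  have "exp (-2::real) \<le> 1" and "1 \<le> sqrt (2 * pi)"
    using pi_gt3 by simp_all
  then have "exp (-2) \<le> sqrt (2 * pi)"
    by linarith
  then show ?thesis
    unfolding gauss_floor_def by (simp add: divide_le_eq_1)
qed

lemma gauss_ge_floor: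
  assumes "\<bar>x\<bar> \<le> 2 * exp a"
  shows "gauss_floor / exp a \<le> gauss a x"
proof -
  have "x\<^sup>2 \<le> (2 * exp a)\<^sup>2"
    using power_mono[OF assms, of 2] by simp
  then have "x\<^sup>2 / (2 * (exp a)\<^sup>2) \<le> 2"
    by (simp add: field_simps power_mult_distrib)
  then have "exp (-2) \<le> exp (- (x\<^sup>2) / (2 * (exp a)\<^sup>2))"
    by simp
  then show ?thesis
    unfolding gauss_formula gauss_floor_def by (simp add: divide_right_mono field_simps)
qed

lemma gauss_mass_interval_ge:
  assumes "-2 * exp b \<le> lo" "lo + exp b \<le> 2 * exp b"
  shows "ennreal gauss_floor \<le> (\<integral>\<^sup>+x. indicator {lo..lo + exp b} x * ennreal (gauss b x) \<partial>lborel)"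
proof -
  have "ennreal gauss_floor = (\<integral>\<^sup>+x. indicator {lo..lo + exp b} x * ennreal (gauss_floor / exp b) \<partial>lborel)"
    by (subst nn_integral_multc)
       (auto simp: ennreal_mult[symmetric] gauss_floor_pos less_imp_le)
  also have "\<dots> \<le> (\<integral>\<^sup>+x. indicator {lo..lo + exp b} x * ennreal (gauss b x) \<partial>lborel)"
    using assms by (intro nn_integral_mono) (auto simp: indicator_def intro!: ennreal_leI gauss_ge_floor)
  finally show ?thesis .
qed

lemma exists_le_gauss_average:
  fixes F :: "real \<Rightarrow> ennreal"
  assumes [measurable]: "F \<in> borel_measurable borel"
    and avg: "(\<integral>\<^sup>+x. ennreal (gauss b x) * F x \<partial>lborel) \<le> ennreal A" and "0 < A"
    and "-2 * exp b \<le> lo" "lo + exp b \<le> 2 * exp b"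
  shows "\<exists>x\<in>{lo..lo + exp b}. F x \<le> ennreal (2 * A / gauss_floor)"
proof (rule ccontr)
  let ?B = "ennreal (2 * A / gauss_floor)"
  assume "\<not> ?thesis"
  then have big: "?B \<le> F x" if "x \<in> {lo..lo + exp b}" for x
    using that by force
  have "?B * ennreal gauss_floor \<le> ?B * (\<integral>\<^sup>+x. indicator {lo..lo + exp b} x * ennreal (gauss b x) \<partial>lborel)"
    using gauss_mass_interval_ge assms by (intro mult_left_mono) auto
  also have "\<dots> = (\<integral>\<^sup>+x. ?B * (indicator {lo..lo + exp b} x * ennreal (gauss b x)) \<partial>lborel)"
    by (rule nn_integral_cmult[symmetric]) simp
  also have "\<dots> \<le> (\<integral>\<^sup>+x. ennreal (gauss b x) * F x \<partial>lborel)"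
  proof (rule nn_integral_mono)
    fix x
    show "?B * (indicator {lo..lo + exp b} x * ennreal (gauss b x)) \<le> ennreal (gauss b x) * F x"
      using mult_right_mono[OF big[of x], of "ennreal (gauss b x)"]
      by (cases "x \<in> {lo..lo + exp b}") (simp_all add: mult.commute)
  qed
  also have "\<dots> \<le> ennreal A"
    by (rule avg)
  finally have "ennreal (2 * A) \<le> ennreal A"
    using gauss_floor_pos \<open>0 < A\<close> by (simp add: ennreal_mult[symmetric])
  then show False
    using \<open>0 < A\<close> by simp
qed

lemma gauss_rescale_le:
  assumes "2 * exp a \<le> r" "r \<le> 4 * exp a" "0 \<le> t0" "t0 \<le> exp c"
  shows "r * gauss (a + c) (r * (t - t0)) \<le> 4 * exp 1 * gauss c t"
proof -
  define A E where "A = exp a" and "E = exp c"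
  have A: "0 < A" and E: "0 < E"
    by (simp_all add: A_def E_def)
  have "2 \<le> r / A"
    using assms A by (simp add: A_def field_simps)
  then have rA: "4 \<le> (r / A)\<^sup>2"
    using power_mono[of 2 "r / A" 2] by simp
  have "t0\<^sup>2 \<le> E\<^sup>2"
    using assms by (simp add: E_def power_mono)
  have "t\<^sup>2 - 4 * (t - t0)\<^sup>2 \<le> 4/3 * t0\<^sup>2"
    using zero_le_power2[of "3 * t - 4 * t0"] by (simp add: power2_eq_square algebra_simps)
  also have "\<dots> \<le> 2 * E\<^sup>2"
    using \<open>t0\<^sup>2 \<le> E\<^sup>2\<close> zero_le_power2[of E] by linarith
  finally have "(t\<^sup>2 - 4 * (t - t0)\<^sup>2) / (2 * E\<^sup>2) \<le> 1"
    using E by simp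
  then have "t\<^sup>2 / (2 * E\<^sup>2) - 1 \<le> 4 * (t - t0)\<^sup>2 / (2 * E\<^sup>2)"
    by (simp add: diff_divide_distrib)
  also have "\<dots> \<le> (r / A)\<^sup>2 * (t - t0)\<^sup>2 / (2 * E\<^sup>2)"
    using rA E by (intro divide_right_mono mult_right_mono) auto
  also have "\<dots> = (r * (t - t0))\<^sup>2 / (2 * (A * E)\<^sup>2)"
    using A by (simp add: power_mult_distrib power_divide)
  finally have "exp (- ((r * (t - t0))\<^sup>2) / (2 * (A * E)\<^sup>2)) \<le> exp 1 * exp (- (t\<^sup>2) / (2 * E\<^sup>2))"
    by (simp add: exp_add[symmetric])
  moreover have "r / (A * E) \<le> 4 / E"
    using assms A E by (simp add: A_def field_simps)
  ultimately have "r / (A * E) * exp (- ((r * (t - t0))\<^sup>2) / (2 * (A * E)\<^sup>2))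
      \<le> 4 / E * (exp 1 * exp (- (t\<^sup>2) / (2 * E\<^sup>2)))"
    using A E assms by (intro mult_mono) auto
  moreover have "exp (a + c) = A * E"
    by (simp add: A_def E_def exp_add)
  ultimately show ?thesis
    unfolding gauss_formula E_def[symmetric] using A E by (simp add: field_simps)
qed

lemma nn_integral_gauss_rescale_le:
  fixes h :: "real \<Rightarrow> ennreal"
  assumes [measurable]: "h \<in> borel_measurable borel"
    and r: "2 * exp a \<le> r" "r \<le> 4 * exp a" and t0: "0 \<le> t0" "t0 \<le> exp c"
  shows "(\<integral>\<^sup>+u. ennreal (gauss (a + c) u) * h u \<partial>lborel)
    \<le> ennreal (4 * exp 1) * (\<integral>\<^sup>+t. ennreal (gauss c t) * h (r * (t - t0)) \<partial>lborel)"
proof -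
  have "0 < r"
    using r exp_gt_zero[of a] by linarith
  then have "(\<integral>\<^sup>+u. ennreal (gauss (a + c) u) * h u \<partial>lborel)
      = ennreal r * (\<integral>\<^sup>+t. ennreal (gauss (a + c) (r * (t - t0))) * h (r * (t - t0)) \<partial>lborel)"
    by (subst nn_integral_real_affine[where c = r and t = "- r * t0"]) (auto simp: algebra_simps)
  also have "\<dots> = (\<integral>\<^sup>+t. ennreal (r * gauss (a + c) (r * (t - t0))) * h (r * (t - t0)) \<partial>lborel)"
    using \<open>0 < r\<close>
    by (subst nn_integral_cmult[symmetric])
       (auto intro!: nn_integral_cong simp: ennreal_mult less_imp_le[OF gauss_pos] mult.assoc)
  also have "\<dots> \<le> (\<integral>\<^sup>+t. ennreal (4 * exp 1) * (ennreal (gauss c t) * h (r * (t - t0))) \<partial>lborel)"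
  proof (rule nn_integral_mono)
    fix t
    have "ennreal (r * gauss (a + c) (r * (t - t0))) \<le> ennreal (4 * exp 1 * gauss c t)"
      using gauss_rescale_le[OF r t0] by (rule ennreal_leI)
    then show "ennreal (r * gauss (a + c) (r * (t - t0))) * h (r * (t - t0))
        \<le> ennreal (4 * exp 1) * (ennreal (gauss c t) * h (r * (t - t0)))"
      using mult_right_mono by (fastforce simp: ennreal_mult less_imp_le[OF gauss_pos] mult.assoc)
  qed
  also have "\<dots> = ennreal (4 * exp 1) * (\<integral>\<^sup>+t. ennreal (gauss c t) * h (r * (t - t0)) \<partial>lborel)"
    by (rule nn_integral_cmult) simp
  finally show ?thesis .
qed

definition gauss_pair :: "real \<Rightarrow> real \<Rightarrow> real \<times> real \<Rightarrow> real" where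
  "gauss_pair a c p = gauss a (fst p) * gauss c (snd p)"

lemma gauss_pair_pos: "0 < gauss_pair a c p"
  by (simp add: gauss_pair_def gauss_pos)

lemma continuous_on_gauss_pair: "continuous_on UNIV (gauss_pair a c)"
  unfolding gauss_pair_def
  by (intro continuous_intros continuous_on_compose2[OF continuous_on_gauss]) auto

lemma nn_integral_gauss_pair_fst:
  fixes G :: "real \<Rightarrow> real \<Rightarrow> ennreal"
  assumes "case_prod G \<in> borel_measurable borel"
  shows "(\<integral>\<^sup>+p. ennreal (gauss_pair a c p) * G (fst p) (snd p) \<partial>lborel)
    = (\<integral>\<^sup>+s. ennreal (gauss a s) * (\<integral>\<^sup>+t. ennreal (gauss c t) * G s t \<partial>lborel) \<partial>lborel)"
proof -
  have [measurable]: "case_prod G \<in> borel_measurable (lborel \<Otimes>\<^sub>M lborel)"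
    using assms by (simp add: lborel_prod)
  have "(\<integral>\<^sup>+p. ennreal (gauss_pair a c p) * G (fst p) (snd p) \<partial>lborel)
      = (\<integral>\<^sup>+s. \<integral>\<^sup>+t. ennreal (gauss a s) * (ennreal (gauss c t) * G s t) \<partial>lborel \<partial>lborel)"
    by (simp add: lborel_prod[symmetric] lborel.nn_integral_fst[symmetric] gauss_pair_def
        ennreal_mult less_imp_le[OF gauss_pos] mult.assoc split_beta')
  also have "\<dots> = (\<integral>\<^sup>+s. ennreal (gauss a s) * (\<integral>\<^sup>+t. ennreal (gauss c t) * G s t \<partial>lborel) \<partial>lborel)"
    by (intro nn_integral_cong nn_integral_cmult) measurable
  finally show ?thesis .
qed

lemma nn_integral_gauss_pair_snd:
  fixes G :: "real \<Rightarrow> real \<Rightarrow> ennreal"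
  assumes "case_prod G \<in> borel_measurable borel"
  shows "(\<integral>\<^sup>+p. ennreal (gauss_pair a c p) * G (fst p) (snd p) \<partial>lborel)
    = (\<integral>\<^sup>+t. ennreal (gauss c t) * (\<integral>\<^sup>+s. ennreal (gauss a s) * G s t \<partial>lborel) \<partial>lborel)"
proof -
  have [measurable]: "case_prod G \<in> borel_measurable (lborel \<Otimes>\<^sub>M lborel)"
    using assms by (simp add: lborel_prod)
  have "(\<integral>\<^sup>+p. ennreal (gauss_pair a c p) * G (fst p) (snd p) \<partial>lborel)
      = (\<integral>\<^sup>+t. \<integral>\<^sup>+s. ennreal (gauss c t) * (ennreal (gauss a s) * G s t) \<partial>lborel \<partial>lborel)"
    by (simp add: lborel_prod[symmetric] lborel_pair.nn_integral_snd[symmetric] gauss_pair_def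
        ennreal_mult less_imp_le[OF gauss_pos] ac_simps split_beta')
  also have "\<dots> = (\<integral>\<^sup>+t. ennreal (gauss c t) * (\<integral>\<^sup>+s. ennreal (gauss a s) * G s t \<partial>lborel) \<partial>lborel)"
    by (intro nn_integral_cong nn_integral_cmult) measurable
  finally show ?thesis .
qed

lemma nn_integral_gauss_pair: "(\<integral>\<^sup>+p. ennreal (gauss_pair a c p) \<partial>lborel) = 1"
  using nn_integral_gauss_pair_fst[of "\<lambda>_ _. 1" a c] by (simp add: nn_integral_gauss)

lemma has_integral_gauss_pair: "(gauss_pair a c has_integral 1) UNIV"
  by (rule nn_integral_has_integral[OF borel_measurable_continuous_onI[OF continuous_on_gauss_pair]])
     (auto simp: nn_integral_gauss_pair less_imp_le[OF gauss_pair_pos])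

lemma exists_good_column:
  fixes G :: "real \<Rightarrow> real \<Rightarrow> ennreal"
  assumes G_borel: "case_prod G \<in> borel_measurable borel"
    and avg: "(\<integral>\<^sup>+p. ennreal (gauss_pair a c p) * G (fst p) (snd p) \<partial>lborel) \<le> ennreal e"
    and "0 < e"
  obtains t0 where "t0 \<in> {0..exp c}"
    "(\<integral>\<^sup>+s. ennreal (gauss a s) * ((\<integral>\<^sup>+t. ennreal (gauss c t) * G s t \<partial>lborel) + G s t0) \<partial>lborel)
      \<le> ennreal (3 * e / gauss_floor)"
proof -
  have [measurable]: "case_prod G \<in> borel_measurable (borel \<Otimes>\<^sub>M borel)"
    using G_borel by (simp add: borel_prod)
  define col where "col t = (\<integral>\<^sup>+s. ennreal (gauss a s) * G s t \<partial>lborel)" for t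
  have [measurable]: "col \<in> borel_measurable borel"
    unfolding col_def by measurable
  obtain t0 where t0: "t0 \<in> {0..exp c}" and col_t0: "col t0 \<le> ennreal (2 * e / gauss_floor)"
    using exists_le_gauss_average[of col c e 0] avg \<open>0 < e\<close>
    unfolding nn_integral_gauss_pair_snd[OF G_borel] col_def by auto
  have "(\<integral>\<^sup>+s. ennreal (gauss a s) * ((\<integral>\<^sup>+t. ennreal (gauss c t) * G s t \<partial>lborel) + G s t0) \<partial>lborel)
      = (\<integral>\<^sup>+s. ennreal (gauss a s) * (\<integral>\<^sup>+t. ennreal (gauss c t) * G s t \<partial>lborel) \<partial>lborel) + col t0"
    unfolding col_def by (simp add: distrib_left nn_integral_add)
  also have "\<dots> \<le> ennreal e + ennreal (2 * e / gauss_floor)"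
    using avg col_t0 unfolding nn_integral_gauss_pair_fst[OF G_borel] by (rule add_mono)
  also have "\<dots> \<le> ennreal (3 * e / gauss_floor)"
    using gauss_floor_pos gauss_floor_le_1 \<open>0 < e\<close>
    by (simp add: ennreal_plus[symmetric] del: ennreal_plus) (simp add: field_simps)
  finally show ?thesis
    using that t0 by blast
qed

lemma exists_good_corners:
  fixes G :: "real \<Rightarrow> real \<Rightarrow> ennreal"
  assumes G_borel: "case_prod G \<in> borel_measurable borel"
    and avg: "(\<integral>\<^sup>+p. ennreal (gauss_pair a c p) * G (fst p) (snd p) \<partial>lborel) \<le> ennreal e"
    and "0 < e"
  obtains t0 s1 s2 where "t0 \<in> {0..exp c}" "s1 \<in> {exp a..2 * exp a}" "s2 \<in> {-2 * exp a..- exp a}"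
    "(\<integral>\<^sup>+t. ennreal (gauss c t) * (G s1 t + G s2 t + G s1 t0 + G s2 t0) \<partial>lborel)
      \<le> ennreal (12 * e / gauss_floor\<^sup>2)"
proof -
  let ?\<kappa> = gauss_floor
  have [measurable]: "case_prod G \<in> borel_measurable (borel \<Otimes>\<^sub>M borel)"
    using G_borel by (simp add: borel_prod)
  obtain t0 where t0: "t0 \<in> {0..exp c}" and
    avg_t0: "(\<integral>\<^sup>+s. ennreal (gauss a s) * ((\<integral>\<^sup>+t. ennreal (gauss c t) * G s t \<partial>lborel) + G s t0) \<partial>lborel)
      \<le> ennreal (3 * e / ?\<kappa>)"
    using exists_good_column[OF G_borel avg \<open>0 < e\<close>] by blast
  define H where "H s = (\<integral>\<^sup>+t. ennreal (gauss c t) * G s t \<partial>lborel) + G s t0" for s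
  have [measurable]: "H \<in> borel_measurable borel"
    unfolding H_def by measurable
  have avg_H: "(\<integral>\<^sup>+s. ennreal (gauss a s) * H s \<partial>lborel) \<le> ennreal (3 * e / ?\<kappa>)"
    using avg_t0 by (simp add: H_def)
  have "0 < 3 * e / ?\<kappa>"
    using gauss_floor_pos \<open>0 < e\<close> by simp
  then obtain s1 s2 where
      s1: "s1 \<in> {exp a..exp a + exp a}" "H s1 \<le> ennreal (2 * (3 * e / ?\<kappa>) / ?\<kappa>)" and
      s2: "s2 \<in> {-2 * exp a..-2 * exp a + exp a}" "H s2 \<le> ennreal (2 * (3 * e / ?\<kappa>) / ?\<kappa>)"
    using exists_le_gauss_average[OF _ avg_H, of "exp a"] exists_le_gauss_average[OF _ avg_H, of "-2 * exp a"]
    by force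
  have "(\<integral>\<^sup>+t. ennreal (gauss c t) * (G s1 t + G s2 t + G s1 t0 + G s2 t0) \<partial>lborel)
      = (\<integral>\<^sup>+t. ennreal (gauss c t) * G s1 t \<partial>lborel) + (\<integral>\<^sup>+t. ennreal (gauss c t) * G s2 t \<partial>lborel)
        + (G s1 t0 + G s2 t0)"
    by (simp add: distrib_left nn_integral_add nn_integral_multc nn_integral_gauss add.assoc)
  also have "\<dots> = H s1 + H s2"
    unfolding H_def by (simp add: ac_simps)
  also have "\<dots> \<le> ennreal (12 * e / ?\<kappa>\<^sup>2)"
    using add_mono[OF s1(2) s2(2)] gauss_floor_pos \<open>0 < e\<close>
    by (simp add: ennreal_plus[symmetric] power2_eq_square del: ennreal_plus)
  finally show ?thesis
    using that t0 s1(1) s2(1) by auto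
qed
section \<open>Uniform convexity\<close>

lemma norm_midpoint_le_scaled:
  fixes x y :: "'a::real_normed_vector"
  assumes d: "\<And>x y :: 'a. norm x \<le> 1 \<Longrightarrow> norm y \<le> 1 \<Longrightarrow> e \<le> norm (x - y) \<Longrightarrow>
      norm ((1/2) *\<^sub>R (x + y)) \<le> 1 - d"
    and x: "norm x = n" and y: "norm y = n" and far: "e * n \<le> norm (x - y)"
  shows "norm ((1/2) *\<^sub>R (x + y)) \<le> (1 - d) * n"
proof (cases "n = 0")
  case True
  with x y show ?thesis by simp
next
  case False
  with x have "0 < n" by auto
  let ?x = "(1/n) *\<^sub>R x" and ?y = "(1/n) *\<^sub>R y"
  have "norm ((1/2) *\<^sub>R (?x + ?y)) \<le> 1 - d"
  proof (rule d)
    show "norm ?x \<le> 1" "norm ?y \<le> 1"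
      using x y \<open>0 < n\<close> by simp_all
    have "norm (?x - ?y) = norm (x - y) / n"
      using \<open>0 < n\<close> by (simp add: scaleR_diff_right[symmetric])
    then show "e \<le> norm (?x - ?y)"
      using far \<open>0 < n\<close> by (simp add: le_divide_eq)
  qed
  moreover have "(1/2) *\<^sub>R (?x + ?y) = (1/n) *\<^sub>R ((1/2) *\<^sub>R (x + y))"
    by (simp add: scaleR_add_right mult.commute)
  ultimately show ?thesis
    using \<open>0 < n\<close> by (simp add: divide_le_eq ac_simps)
qed

lemma uniformly_convex_modulus:
  assumes uc: "uniformly_convex (UNIV :: 'a::real_normed_vector set)" and "0 < e"
  obtains d where "0 < d"
    "\<And>x y :: 'a. \<And>n. norm x = n \<Longrightarrow> norm y = n \<Longrightarrow>
        norm (x - y) \<le> e * n + (2 / d) * (n - norm ((1/2) *\<^sub>R (x + y)))"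
proof -
  obtain d where "0 < d" and d: "\<And>x y :: 'a. norm x \<le> 1 \<Longrightarrow> norm y \<le> 1 \<Longrightarrow> e \<le> norm (x - y) \<Longrightarrow>
      norm ((1/2) *\<^sub>R (x + y)) \<le> 1 - d"
    using uc \<open>0 < e\<close> unfolding uniformly_convex_def by (meson UNIV_I)
  have "norm (x - y) \<le> e * n + (2 / d) * (n - norm ((1/2) *\<^sub>R (x + y)))"
    if x: "norm x = n" and y: "norm y = n" for x y :: 'a and n
  proof (cases "e * n \<le> norm (x - y)")
    case True
    have "norm ((1/2) *\<^sub>R (x + y)) \<le> (1 - d) * n"
      by (rule norm_midpoint_le_scaled[OF _ x y True]) (fact d)
    then have "2 * n \<le> (2 / d) * (n - norm ((1/2) *\<^sub>R (x + y)))"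
      using \<open>0 < d\<close> by (simp add: field_simps)
    moreover have "norm (x - y) \<le> 2 * n"
      using norm_triangle_ineq4[of x y] x y by simp
    moreover have "0 \<le> e * n"
      using \<open>0 < e\<close> x by auto
    ultimately show ?thesis
      by linarith
  next
    case False
    have "norm ((1/2) *\<^sub>R (x + y)) \<le> n"
      using norm_triangle_ineq[of x y] x y by simp
    then have "0 \<le> (2 / d) * (n - norm ((1/2) *\<^sub>R (x + y)))"
      using \<open>0 < d\<close> by simp
    with False show ?thesis
      by linarith
  qed
  with \<open>0 < d\<close> show ?thesis
    by (rule that)
qed

lemma norm_midpoint_average_le:
  fixes w :: "'n::euclidean_space \<Rightarrow> real" and F :: "'n \<Rightarrow> 'a::banach"
  assumes w: "continuous_on UNIV w" "(w has_integral 1) UNIV" "\<And>x. 0 \<le> w x"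
    and F: "continuous_on UNIV F" "\<And>x. norm (F x) \<le> B"
  shows "norm ((1/2) *\<^sub>R (integral UNIV (\<lambda>x. w x *\<^sub>R F x) + y))
    \<le> integral UNIV (\<lambda>x. w x * norm ((1/2) *\<^sub>R (F x + y)))"
proof -
  have w_int: "w integrable_on UNIV"
    using w(2) by blast
  have "(\<lambda>x. w x *\<^sub>R F x) integrable_on UNIV"
    by (rule integrable_on_UNIV_weighted_bounded[OF w(1) w_int w(3) F])
  then have "((\<lambda>x. (1/2) *\<^sub>R (w x *\<^sub>R F x + w x *\<^sub>R y)) has_integral
      (1/2) *\<^sub>R (integral UNIV (\<lambda>x. w x *\<^sub>R F x) + 1 *\<^sub>R y)) UNIV"
    by (intro has_integral_cmul has_integral_add has_integral_scaleR_left w(2) integrable_integral)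
  then have avg: "((\<lambda>x. w x *\<^sub>R ((1/2) *\<^sub>R (F x + y))) has_integral
      (1/2) *\<^sub>R (integral UNIV (\<lambda>x. w x *\<^sub>R F x) + y)) UNIV"
    by (simp add: scaleR_add_right)
  have "continuous_on UNIV (\<lambda>x. (1/2) *\<^sub>R (F x + y))"
    using F(1) by (intro continuous_intros)
  moreover have "norm ((1/2) *\<^sub>R (F x + y)) \<le> B + norm y" for x
  proof -
    have "norm (F x + y) \<le> B + norm y" and "0 \<le> B + norm y"
      using norm_triangle_ineq[of "F x" y] F(2)[of x] norm_ge_zero[of "F x"] norm_ge_zero[of y]
      by linarith+
    then show ?thesis
      by simp
  qed
  ultimately have "(\<lambda>x. w x * norm ((1/2) *\<^sub>R (F x + y))) integrable_on UNIV"
    by (rule integrable_on_UNIV_weighted_norm[OF w(1) w_int w(3)])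
  with avg w(3) show ?thesis
    by (subst integral_unique[OF avg, symmetric], intro integral_norm_bound_integral) auto
qed

lemma integral_dist_le_modulus:
  fixes w :: "'n::euclidean_space \<Rightarrow> real" and F :: "'n \<Rightarrow> 'a::banach"
  assumes w: "continuous_on UNIV w" "(w has_integral 1) UNIV" "\<And>x. 0 \<le> w x"
    and F: "continuous_on UNIV F" "\<And>x. norm (F x) = n" and y: "norm y = n" and "0 < d"
    and modulus: "\<And>x. norm x = n \<Longrightarrow> norm (x - y) \<le> e * n + (2 / d) * (n - norm ((1/2) *\<^sub>R (x + y)))"
  shows "integral UNIV (\<lambda>x. w x * norm (F x - y))
    \<le> e * n + (2 / d) * (n - norm ((1/2) *\<^sub>R (integral UNIV (\<lambda>x. w x *\<^sub>R F x) + y)))"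
proof -
  define mid where "mid x = norm ((1/2) *\<^sub>R (F x + y))" for x
  have w_int: "w integrable_on UNIV"
    using w(2) by blast
  have F_bound: "norm (F x) \<le> n" for x
    using F(2) by simp
  have "continuous_on UNIV (\<lambda>x. (1/2) *\<^sub>R (F x + y))"
    using F(1) by (intro continuous_intros)
  moreover have "norm ((1/2) *\<^sub>R (F x + y)) \<le> n" for x
    using norm_triangle_ineq[of "F x" y] F(2)[of x] y by simp
  ultimately have mid_int: "(\<lambda>x. w x * mid x) integrable_on UNIV"
    unfolding mid_def by (rule integrable_on_UNIV_weighted_norm[OF w(1) w_int w(3)])
  have "integral UNIV (\<lambda>x. w x * norm (F x - y))
      \<le> integral UNIV (\<lambda>x. (e * n + (2 / d) * n) * w x - (2 / d) * (w x * mid x))"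
  proof (rule integral_le)
    have "continuous_on UNIV (\<lambda>x. F x - y)"
      using F(1) by (intro continuous_intros)
    moreover have "norm (F x - y) \<le> 2 * n" for x
      using norm_triangle_ineq4[of "F x" y] F(2)[of x] y by simp
    ultimately show "(\<lambda>x. w x * norm (F x - y)) integrable_on UNIV"
      by (rule integrable_on_UNIV_weighted_norm[OF w(1) w_int w(3)])
    show "(\<lambda>x. (e * n + (2 / d) * n) * w x - (2 / d) * (w x * mid x)) integrable_on UNIV"
      using w_int mid_int by (intro integrable_diff integrable_on_mult_right)
    show "w x * norm (F x - y) \<le> (e * n + (2 / d) * n) * w x - (2 / d) * (w x * mid x)" for x
      using mult_left_mono[OF modulus[OF F(2)[of x]] w(3)[of x]]
      by (simp add: mid_def algebra_simps)
  qed
  also have "\<dots> = e * n + (2 / d) * (n - integral UNIV (\<lambda>x. w x * mid x))"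
    using has_integral_diff[OF has_integral_mult_right[OF w(2), of "e * n + (2 / d) * n"]
        has_integral_mult_right[OF integrable_integral[OF mid_int], of "2 / d"]]
    by (simp add: integral_unique right_diff_distrib)
  also have "\<dots> \<le> e * n + (2 / d) * (n - norm ((1/2) *\<^sub>R (integral UNIV (\<lambda>x. w x *\<^sub>R F x) + y)))"
    using norm_midpoint_average_le[OF w F(1) F_bound, of y] \<open>0 < d\<close>
    unfolding mid_def by (intro add_left_mono mult_left_mono) auto
  finally show ?thesis .
qed

section \<open>Isometric representations of the Heisenberg group\<close>

locale heis_rep =
  fixes \<pi> :: "heis \<Rightarrow> 'a::real_normed_vector \<Rightarrow> 'a"
  assumes heis_isometric_rep: "heis_isometric_rep \<pi>"
begin

lemma linear_rep: "linear (\<pi> g)"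
  using heis_isometric_rep unfolding heis_isometric_rep_def by blast

lemma norm_rep [simp]: "norm (\<pi> g v) = norm v"
  using heis_isometric_rep unfolding heis_isometric_rep_def by blast

lemma rep_hmul: "\<pi> (hmul g h) v = \<pi> g (\<pi> h v)"
  using heis_isometric_rep unfolding heis_isometric_rep_def by (metis comp_apply)

lemma rep_hone [simp]: "\<pi> hone v = v"
  using heis_isometric_rep by (simp add: heis_isometric_rep_def)

lemma continuous_on_rep: "continuous_on UNIV (\<lambda>g. \<pi> g v)"
  using heis_isometric_rep by (simp add: heis_isometric_rep_def)

lemma norm_diff_rep_hmul_left: "norm (\<pi> (hmul k g) v - \<pi> (hmul k h) v) = norm (\<pi> g v - \<pi> h v)"
  by (simp add: rep_hmul linear_diff[OF linear_rep, symmetric])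

text \<open>Left translation by \<open>(s1, t, s2 * t)\<close> carries \<open>Z((s1 - s2) t)\<close> and \<open>X(s2 - s1)\<close> to
  \<open>X(s1) Y(t)\<close> and \<open>X(s2) Y(t)\<close>; the triangle inequality through \<open>X(s2 - s1)\<close> then compares
  \<open>Z((s1 - s2) t1)\<close> with \<open>Z((s1 - s2) t2)\<close>.\<close>
lemma norm_rep_Zg_commutator_le:
  "norm (\<pi> (Zg ((s1 - s2) * (t1 - t2))) v - v)
    \<le> norm (\<pi> (hmul (Xg s1) (Yg t1)) v - y) + norm (\<pi> (hmul (Xg s2) (Yg t1)) v - y)
      + norm (\<pi> (hmul (Xg s1) (Yg t2)) v - y) + norm (\<pi> (hmul (Xg s2) (Yg t2)) v - y)"
proof -
  define r where "r = s1 - s2"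
  have row: "norm (\<pi> (Zg (r * t)) v - \<pi> (Xg (- r)) v)
      \<le> norm (\<pi> (hmul (Xg s1) (Yg t)) v - y) + norm (\<pi> (hmul (Xg s2) (Yg t)) v - y)" for t
  proof -
    have "hmul (s1, t, s2 * t) (Zg (r * t)) = hmul (Xg s1) (Yg t)"
      and "hmul (s1, t, s2 * t) (Xg (- r)) = hmul (Xg s2) (Yg t)"
      by (simp_all add: hmul_def Xg_def Yg_def Zg_def r_def algebra_simps)
    then have "norm (\<pi> (Zg (r * t)) v - \<pi> (Xg (- r)) v)
        = norm (\<pi> (hmul (Xg s1) (Yg t)) v - \<pi> (hmul (Xg s2) (Yg t)) v)"
      using norm_diff_rep_hmul_left[of "(s1, t, s2 * t)" "Zg (r * t)" v "Xg (- r)"] by simp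
    then show ?thesis
      using norm_triangle_ineq4[of "\<pi> (hmul (Xg s1) (Yg t)) v - y" "\<pi> (hmul (Xg s2) (Yg t)) v - y"]
      by simp
  qed
  have "hmul (Zg (r * t2)) (Zg (r * (t1 - t2))) = Zg (r * t1)" and "hmul (Zg (r * t2)) hone = Zg (r * t2)"
    by (simp_all add: hmul_def Zg_def hone_def algebra_simps)
  then have "norm (\<pi> (Zg (r * (t1 - t2))) v - v) = norm (\<pi> (Zg (r * t1)) v - \<pi> (Zg (r * t2)) v)"
    using norm_diff_rep_hmul_left[of "Zg (r * t2)" "Zg (r * (t1 - t2))" v hone] by simp
  also have "\<dots> \<le> norm (\<pi> (Zg (r * t1)) v - \<pi> (Xg (- r)) v) + norm (\<pi> (Zg (r * t2)) v - \<pi> (Xg (- r)) v)"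
    by (rule norm_diff_triangle_le[where y = "\<pi> (Xg (- r)) v"]) (simp_all add: norm_minus_commute)
  finally show ?thesis
    using row[of t1] row[of t2] unfolding r_def by linarith
qed

lemma continuous_on_rep_XY: "continuous_on UNIV (\<lambda>p. \<pi> (hmul (Xg (fst p)) (Yg (snd p))) v)"
  unfolding hmul_def Xg_def Yg_def
  by (rule continuous_on_compose2[OF continuous_on_rep]) (auto intro!: continuous_intros)

lemma continuous_on_rep_Zg: "continuous_on UNIV (\<lambda>u. \<pi> (Zg u) v)"
  unfolding Zg_def by (rule continuous_on_compose2[OF continuous_on_rep]) (auto intro!: continuous_intros)

end

locale banach_heis_rep = heis_rep \<pi> for \<pi> :: "heis \<Rightarrow> 'a::banach \<Rightarrow> 'a"
begin

lemma piXY_eq_integral: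
  "piXY \<pi> a c v = integral UNIV (\<lambda>p. gauss_pair a c p *\<^sub>R \<pi> (hmul (Xg (fst p)) (Yg (snd p))) v)"
  unfolding piXY_def gauss_pair_def by (simp add: case_prod_beta')

lemma integrable_on_gauss_pair_rep:
  "(\<lambda>p. gauss_pair a c p *\<^sub>R \<pi> (hmul (Xg (fst p)) (Yg (snd p))) v) integrable_on UNIV"
  by (rule integrable_on_UNIV_weighted_bounded[where B = "norm v"])
     (use has_integral_gauss_pair gauss_pair_pos in \<open>auto intro: continuous_on_gauss_pair continuous_on_rep_XY less_imp_le\<close>)

lemma norm_piXY_le: "norm (piXY \<pi> a c v) \<le> norm v"
proof -
  have bound: "((\<lambda>p. norm v * gauss_pair a c p) has_integral norm v) UNIV"
    using has_integral_mult_right[OF has_integral_gauss_pair, of "norm v"] by simp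
  then have "norm (piXY \<pi> a c v) \<le> integral UNIV (\<lambda>p. norm v * gauss_pair a c p)"
    unfolding piXY_eq_integral
    by (intro integral_norm_bound_integral integrable_on_gauss_pair_rep)
       (auto dest: has_integral_integrable simp: less_imp_le[OF gauss_pair_pos])
  also have "\<dots> = norm v"
    using bound by (rule integral_unique)
  finally show ?thesis .
qed

lemma norm_piZ_ge: "norm v - integral UNIV (\<lambda>u. gauss b u * norm (\<pi> (Zg u) v - v)) \<le> norm (piZ \<pi> b v)"
proof -
  have gauss_int: "gauss b integrable_on UNIV"
    using has_integral_gauss by blast
  have Z_int: "(\<lambda>u. gauss b u *\<^sub>R \<pi> (Zg u) v) integrable_on UNIV"
    by (rule integrable_on_UNIV_weighted_bounded[OF continuous_on_gauss gauss_int _ continuous_on_rep_Zg,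
          where B = "norm v"]) (simp_all add: less_imp_le[OF gauss_pos])
  have const: "((\<lambda>u. gauss b u *\<^sub>R v) has_integral v) UNIV"
    using has_integral_scaleR_left[OF has_integral_gauss, where c = v] by simp
  have "(\<lambda>u. gauss b u *\<^sub>R norm (\<pi> (Zg u) v - v)) integrable_on UNIV"
    by (rule integrable_on_UNIV_weighted_bounded[OF continuous_on_gauss gauss_int _ _, where B = "2 * norm v"])
       (auto simp: less_imp_le[OF gauss_pos] intro!: continuous_intros continuous_on_rep_Zg
         intro: order_trans[OF norm_triangle_ineq4])
  then have "norm (integral UNIV (\<lambda>u. gauss b u *\<^sub>R \<pi> (Zg u) v - gauss b u *\<^sub>R v))
      \<le> integral UNIV (\<lambda>u. gauss b u * norm (\<pi> (Zg u) v - v))"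
    using gauss_pos[of b]
    by (intro integral_norm_bound_integral integrable_diff Z_int has_integral_integrable[OF const])
       (auto simp: scaleR_diff_right[symmetric] less_imp_le)
  moreover have "integral UNIV (\<lambda>u. gauss b u *\<^sub>R \<pi> (Zg u) v - gauss b u *\<^sub>R v) = piZ \<pi> b v - v"
    using integral_diff[OF Z_int has_integral_integrable[OF const]] integral_unique[OF const]
    by (simp add: piZ_def)
  ultimately show ?thesis
    using norm_triangle_ineq2[of v "piZ \<pi> b v"] by (simp add: norm_minus_commute)
qed

lemma nn_integral_Zg_displacement_le:
  assumes avg: "(\<integral>\<^sup>+p. ennreal (gauss_pair a c p) * ennreal (norm (\<pi> (hmul (Xg (fst p)) (Yg (snd p))) v - y))
      \<partial>lborel) \<le> ennreal e"
    and "0 < e"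
  shows "(\<integral>\<^sup>+u. ennreal (gauss (a + c) u) * ennreal (norm (\<pi> (Zg u) v - v)) \<partial>lborel)
    \<le> ennreal (48 * exp 1 * e / gauss_floor\<^sup>2)"
proof -
  define dist_y where "dist_y p = norm (\<pi> (hmul (Xg (fst p)) (Yg (snd p))) v - y)" for p
  define disp where "disp u = norm (\<pi> (Zg u) v - v)" for u
  define G where "G s t = ennreal (dist_y (s, t))" for s t
  have [measurable]: "dist_y \<in> borel_measurable borel" "disp \<in> borel_measurable borel"
    unfolding dist_y_def disp_def
    by (intro borel_measurable_continuous_onI continuous_intros continuous_on_rep_XY continuous_on_rep_Zg)+
  have G_borel: "case_prod G \<in> borel_measurable borel"
    unfolding G_def case_prod_beta' prod.collapse by measurable
  have "(\<integral>\<^sup>+p. ennreal (gauss_pair a c p) * G (fst p) (snd p) \<partial>lborel) \<le> ennreal e"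
    using avg by (simp add: G_def dist_y_def)
  then obtain t0 s1 s2 where t0: "t0 \<in> {0..exp c}" and s: "s1 \<in> {exp a..2 * exp a}" "s2 \<in> {-2 * exp a..- exp a}"
    and corners: "(\<integral>\<^sup>+t. ennreal (gauss c t) * (G s1 t + G s2 t + G s1 t0 + G s2 t0) \<partial>lborel)
      \<le> ennreal (12 * e / gauss_floor\<^sup>2)"
    using exists_good_corners[OF G_borel _ \<open>0 < e\<close>] by blast
  define r where "r = s1 - s2"
  have r: "2 * exp a \<le> r" "r \<le> 4 * exp a"
    using s by (auto simp: r_def)
  have "(\<integral>\<^sup>+u. ennreal (gauss (a + c) u) * ennreal (disp u) \<partial>lborel)
      \<le> ennreal (4 * exp 1) * (\<integral>\<^sup>+t. ennreal (gauss c t) * ennreal (disp (r * (t - t0))) \<partial>lborel)"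
    using t0 by (intro nn_integral_gauss_rescale_le r) auto
  also have "\<dots> \<le> ennreal (4 * exp 1) * (\<integral>\<^sup>+t. ennreal (gauss c t) * (G s1 t + G s2 t + G s1 t0 + G s2 t0) \<partial>lborel)"
  proof (rule mult_left_mono[OF nn_integral_mono])
    fix t
    have "disp (r * (t - t0)) \<le> dist_y (s1, t) + dist_y (s2, t) + dist_y (s1, t0) + dist_y (s2, t0)"
      unfolding disp_def dist_y_def r_def by (simp add: norm_rep_Zg_commutator_le)
    then show "ennreal (gauss c t) * ennreal (disp (r * (t - t0)))
        \<le> ennreal (gauss c t) * (G s1 t + G s2 t + G s1 t0 + G s2 t0)"
      unfolding G_def
      by (intro mult_left_mono) (auto simp: dist_y_def ennreal_plus[symmetric] simp del: ennreal_plus intro: ennreal_leI)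
  qed simp
  also have "\<dots> \<le> ennreal (4 * exp 1) * ennreal (12 * e / gauss_floor\<^sup>2)"
    using corners by (rule mult_left_mono) simp
  also have "\<dots> = ennreal (48 * exp 1 * e / gauss_floor\<^sup>2)"
    using \<open>0 < e\<close> by (simp add: ennreal_mult[symmetric])
  finally show ?thesis
    unfolding disp_def .
qed

lemma integral_Zg_displacement_le:
  assumes avg: "integral UNIV (\<lambda>p. gauss_pair a c p * norm (\<pi> (hmul (Xg (fst p)) (Yg (snd p))) v - y)) \<le> e"
    and "0 < e"
  shows "integral UNIV (\<lambda>u. gauss (a + c) u * norm (\<pi> (Zg u) v - v)) \<le> 48 * exp 1 * e / gauss_floor\<^sup>2"
proof -
  have "(\<integral>\<^sup>+p. ennreal (gauss_pair a c p) * ennreal (norm (\<pi> (hmul (Xg (fst p)) (Yg (snd p))) v - y)) \<partial>lborel)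
      = ennreal (integral UNIV (\<lambda>p. gauss_pair a c p * norm (\<pi> (hmul (Xg (fst p)) (Yg (snd p))) v - y)))"
    by (rule nn_integral_weighted_eq_integral[OF continuous_on_gauss_pair, where B = "norm v + norm y"])
       (use has_integral_gauss_pair in \<open>auto simp: less_imp_le[OF gauss_pair_pos]
         intro!: continuous_intros continuous_on_rep_XY
         intro: has_integral_integrable order_trans[OF norm_triangle_ineq4]\<close>)
  also have "\<dots> \<le> ennreal e"
    using avg by (rule ennreal_leI)
  finally have "(\<integral>\<^sup>+u. ennreal (gauss (a + c) u) * ennreal (norm (\<pi> (Zg u) v - v)) \<partial>lborel)
      \<le> ennreal (48 * exp 1 * e / gauss_floor\<^sup>2)"
    using \<open>0 < e\<close> by (rule nn_integral_Zg_displacement_le)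
  moreover have "(\<integral>\<^sup>+u. ennreal (gauss (a + c) u) * ennreal (norm (\<pi> (Zg u) v - v)) \<partial>lborel)
      = ennreal (integral UNIV (\<lambda>u. gauss (a + c) u * norm (\<pi> (Zg u) v - v)))"
    by (rule nn_integral_weighted_eq_integral[OF continuous_on_gauss, where B = "2 * norm v"])
       (use has_integral_gauss in \<open>auto simp: less_imp_le[OF gauss_pos]
         intro!: continuous_intros continuous_on_rep_Zg
         intro: has_integral_integrable order_trans[OF norm_triangle_ineq4]\<close>)
  ultimately show ?thesis
    using \<open>0 < e\<close> by (simp add: ennreal_le_iff)
qed

lemma norm_piXY_le_twice_norm_piZ:
  assumes "0 < e0" "e0 \<le> gauss_floor\<^sup>2 / (192 * exp 1)" and "0 < d"
    and modulus: "\<And>x y :: 'a. \<And>n. norm x = n \<Longrightarrow> norm y = n \<Longrightarrow>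
        norm (x - y) \<le> e0 * n + (2 / d) * (n - norm ((1/2) *\<^sub>R (x + y)))"
    and large: "(1 - d * e0) * norm \<xi> < norm (piXY \<pi> a c \<xi>)"
  shows "norm (piXY \<pi> a c \<xi>) \<le> 2 * norm (piZ \<pi> (a + c) \<xi>)"
proof (cases "piXY \<pi> a c \<xi> = 0")
  case False
  define \<eta> n where "\<eta> = piXY \<pi> a c \<xi>" and "n = norm \<xi>"
  have "norm \<eta> \<le> n" "0 < norm \<eta>"
    using False norm_piXY_le by (simp_all add: \<eta>_def n_def)
  then have "0 < n"
    by linarith
  define y where "y = (n / norm \<eta>) *\<^sub>R \<eta>"
  have "norm y = n" and "norm ((1/2) *\<^sub>R (\<eta> + y)) = (norm \<eta> + n) / 2"
    using \<open>0 < norm \<eta>\<close> \<open>norm \<eta> \<le> n\<close>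
    by (simp_all add: y_def n_def scaleR_add_left[symmetric] distrib_right field_simps)
  note mid = this(2)
  have modulus_y: "norm x = n \<Longrightarrow> norm (x - y) \<le> e0 * n + (2 / d) * (n - norm ((1/2) *\<^sub>R (x + y)))" for x
    using modulus \<open>norm y = n\<close> by blast
  have "integral UNIV (\<lambda>p. gauss_pair a c p * norm (\<pi> (hmul (Xg (fst p)) (Yg (snd p))) \<xi> - y))
      \<le> e0 * n + (2 / d) * (n - norm ((1/2) *\<^sub>R (\<eta> + y)))"
    unfolding \<eta>_def piXY_eq_integral
    by (rule integral_dist_le_modulus[OF continuous_on_gauss_pair has_integral_gauss_pair _
          continuous_on_rep_XY _ \<open>norm y = n\<close> \<open>0 < d\<close> modulus_y])
       (simp_all add: n_def less_imp_le[OF gauss_pair_pos])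
  also have "\<dots> = e0 * n + (2 / d) * (n - (norm \<eta> + n) / 2)"
    by (simp only: mid)
  also have "\<dots> = e0 * n + (n - norm \<eta>) / d"
    using \<open>0 < d\<close> by (simp add: field_simps)
  also have "\<dots> \<le> 2 * e0 * n"
    using large \<open>0 < d\<close> by (simp add: \<eta>_def n_def field_simps)
  finally have "integral UNIV (\<lambda>u. gauss (a + c) u * norm (\<pi> (Zg u) \<xi> - \<xi>))
      \<le> 48 * exp 1 * (2 * e0 * n) / gauss_floor\<^sup>2"
    using \<open>0 < e0\<close> \<open>0 < n\<close> by (intro integral_Zg_displacement_le) auto
  also have "\<dots> \<le> n / 2"
    using assms(2) gauss_floor_pos \<open>0 < n\<close> by (simp add: field_simps)
  finally show ?thesis
    using norm_piZ_ge[of \<xi> "a + c"] \<open>norm \<eta> \<le> n\<close> by (simp add: \<eta>_def n_def)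
qed simp

end

theorem lemma4p2:
  assumes "uniformly_convex (UNIV :: 'a::banach set)"
  shows "\<exists>q0::real. q0 < 1 \<and>
    (\<forall>\<pi> :: heis \<Rightarrow> 'a \<Rightarrow> 'a. heis_isometric_rep \<pi> \<longrightarrow>
      (\<forall>a c :: real. \<forall>\<xi> :: 'a.
         norm (piXY \<pi> a c \<xi>) \<le> max (q0 * norm \<xi>) (2 * norm (piZ \<pi> (a + c) \<xi>))))"
proof -
  define e0 where "e0 = gauss_floor\<^sup>2 / (192 * exp 1)"
  have "0 < e0"
    unfolding e0_def using gauss_floor_pos by simp
  then obtain d where "0 < d" and modulus: "\<And>x y :: 'a. \<And>n. norm x = n \<Longrightarrow> norm y = n \<Longrightarrow>
      norm (x - y) \<le> e0 * n + (2 / d) * (n - norm ((1/2) *\<^sub>R (x + y)))"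
    using uniformly_convex_modulus[OF assms] by blast
  show ?thesis
  proof (intro exI[of _ "1 - d * e0"] conjI allI impI)
    show "1 - d * e0 < 1"
      using \<open>0 < d\<close> \<open>0 < e0\<close> by simp
    fix \<pi> :: "heis \<Rightarrow> 'a \<Rightarrow> 'a" and a c \<xi>
    assume "heis_isometric_rep \<pi>"
    then interpret banach_heis_rep \<pi>
      by unfold_locales
    show "norm (piXY \<pi> a c \<xi>) \<le> max ((1 - d * e0) * norm \<xi>) (2 * norm (piZ \<pi> (a + c) \<xi>))"
    proof (cases "(1 - d * e0) * norm \<xi> < norm (piXY \<pi> a c \<xi>)")
      case True
      have "norm (piXY \<pi> a c \<xi>) \<le> 2 * norm (piZ \<pi> (a + c) \<xi>)"
        by (rule norm_piXY_le_twice_norm_piZ[OF \<open>0 < e0\<close> _ \<open>0 < d\<close> _ True])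
           (simp add: e0_def, fact modulus)
      then show ?thesis
        by simp
    qed simp
  qed
qed

end
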